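(* Let $(H,e)$ be a unital Hilbert space. Then, with respect to the matrix pairing between $M(H)$ and $M(\overline H)$, $(\max\overline{\mathfrak c_e})^\boxdot=\min\mathfrak c_e$ and $(\min\overline{\mathfrak c_e})^\boxdot=\max\mathfrak c_e$.
   Context: A Hilbert $*$-space is a complex Hilbert space $H$ (inner product linear in the first variable) with a conjugate-linear map $\zeta\mapsto\zeta^*$, $\zeta^{**}=\zeta$, $(\zeta^*,\eta^* )=\overline{(\zeta,\eta)}$. A unital Hilbert space $(H,e)$ has a fixed hermitian unit vector $e$, and unital cone $\mathfrak c_e=\{\zeta\in H_h:\|\zeta\|\le\sqrt2(\zeta,e)\}$. The conjugate space $\overline H$ (vectors $\bar\eta$, $\lambda\bar\eta=\overline{\bar\lambda\eta}$, $(\bar\zeta,\bar\eta)=\overline{(\zeta,\eta)}$, involution $\bar\eta^*=\overline{\eta^*}$) is a unital Hilbert space with unit $\bar e$ and cone $\overline{\mathfrak c_e}=\{\bar\zeta:\zeta\in\mathfrak c_e\}$; $H,\overline H$ are paired by $\langle\zeta,\bar\eta\rangle=(\zeta,\eta)$. Matrices over $H$ or $\overline H$ carry the involution $[x_{ij}]^*=[x_{ji}^*]$. Matrix pairing: for $\zeta\in M_m(H)$, $\bar\eta=[\overline{\eta_{st}}]\in M_n(\overline H)$, $\langle\langle\zeta,\bar\eta\rangle\rangle=[(\zeta_{ik},\eta_{jl})]_{(i,j),(k,l)}\in M_{mn}$. Quantum polar of a family $\mathfrak M$ of matrices over $H$: $\mathfrak M^\boxdot=\{\bar\eta\in M_n(\overline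 H)_h, n\ge1:\langle\langle\zeta,\bar\eta\rangle\rangle\ge0\ \forall\zeta\in\mathfrak M\}$; symmetrically, for a family $\mathfrak N$ over $\overline H$, $\mathfrak N^\boxdot=\{\zeta\in M_n(H)_h:\langle\langle\zeta,\bar\eta\rangle\rangle\ge0\ \forall\bar\eta\in\mathfrak N\}$ (a set of vectors is a family at level $1$). For a unital Hilbert space $(K,u)$ with cone $\mathfrak c_u$: a state is a linear functional $\sigma$ on $K$ with $\sigma(u)=1$, $\sigma(\mathfrak c_u)\ge0$; $\min\mathfrak c_u\cap M_n(K)=\{x\in M_n(K)_h:[\sigma(x_{ij})]\ge0\ \forall$ states $\sigma\}$; $\max\mathfrak c_u=\mathfrak c_u^{\boxdot\boxdot}$. These apply to $(H,e)$ and to $(\overline H,\bar e)$. *)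

theory Defs
  imports Complex_Main
begin

record 'h hsp =
  hscal :: "complex \<Rightarrow> 'h \<Rightarrow> 'h"
  hip   :: "'h \<Rightarrow> 'h \<Rightarrow> complex"
  hstar :: "'h \<Rightarrow> 'h"

definition hnorm :: "('h, 'z) hsp_scheme \<Rightarrow> 'h \<Rightarrow> real" where
  "hnorm H x = sqrt (Re (hip H x x))"

definition complex_vspace :: "('h::ab_group_add) hsp \<Rightarrow> bool" where
  "complex_vspace H \<longleftrightarrow>
     (\<forall>x. hscal H 1 x = x) \<and>
     (\<forall>a b x. hscal H a (hscal H b x) = hscal H (a * b) x) \<and>
     (\<forall>a x y. hscal H a (x + y) = hscal H a x + hscal H a y) \<and>
     (\<forall>a b x. hscal H (a + b) x = hscal H a x + hscal H b x)"

definition inner_product_space :: "('h::ab_group_add) hsp \<Rightarrow> bool" where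
  "inner_product_space H \<longleftrightarrow> complex_vspace H \<and>
     (\<forall>x y z. hip H (x + y) z = hip H x z + hip H y z) \<and>
     (\<forall>a x y. hip H (hscal H a x) y = a * hip H x y) \<and>
     (\<forall>x y. hip H y x = cnj (hip H x y)) \<and>
     (\<forall>x. Im (hip H x x) = 0 \<and> 0 \<le> Re (hip H x x)) \<and>
     (\<forall>x. hip H x x = 0 \<longrightarrow> x = 0)"

definition complete_hsp :: "('h::ab_group_add) hsp \<Rightarrow> bool" where
  "complete_hsp H \<longleftrightarrow>
     (\<forall>X :: nat \<Rightarrow> 'h.
        (\<forall>\<epsilon>>0. \<exists>N. \<forall>m\<ge>N. \<forall>n\<ge>N. hnorm H (X m - X n) < \<epsilon>) \<longrightarrow>
        (\<exists>L. (\<lambda>n. hnorm H (X n - L)) \<longlonglongrightarrow> 0))"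

definition hilbert_star_space :: "('h::ab_group_add) hsp \<Rightarrow> bool" where
  "hilbert_star_space H \<longleftrightarrow> inner_product_space H \<and> complete_hsp H \<and>
     (\<forall>x y. hstar H (x + y) = hstar H x + hstar H y) \<and>
     (\<forall>a x. hstar H (hscal H a x) = hscal H (cnj a) (hstar H x)) \<and>
     (\<forall>x. hstar H (hstar H x) = x) \<and>
     (\<forall>x y. hip H (hstar H x) (hstar H y) = cnj (hip H x y))"

definition hermitian_part :: "('h::ab_group_add) hsp \<Rightarrow> 'h set" where
  "hermitian_part H = {x. hstar H x = x}"

definition unital_hilbert_space :: "('h::ab_group_add) hsp \<Rightarrow> 'h \<Rightarrow> bool" where
  "unital_hilbert_space H e \<longleftrightarrow> hilbert_star_space H \<and> e \<in> hermitian_part H \<and> hnorm H e = 1"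

text \<open>Unital cone.  For hermitian \<zeta> the number (\<zeta>,e) is real.\<close>
definition unital_cone :: "('h::ab_group_add) hsp \<Rightarrow> 'h \<Rightarrow> 'h set" where
  "unital_cone H e = {z \<in> hermitian_part H. hnorm H z \<le> sqrt 2 * Re (hip H z e)}"

text \<open>The conjugate space, realised on the same additive group: the vector \<open>\<eta>\<close> plays
  the role of \<open>\<eta>-bar\<close>; \<open>\<lambda>\<cdot>\<eta>-bar = (cnj \<lambda> \<cdot> \<eta>)-bar\<close>,
  \<open>(\<zeta>-bar,\<eta>-bar) = cnj (\<zeta>,\<eta>)\<close>, \<open>\<eta>-bar* = (\<eta>*)-bar\<close>.\<close>
definition conj_space :: "('h::ab_group_add) hsp \<Rightarrow> 'h hsp" where
  "conj_space H = \<lparr>hscal = (\<lambda>a x. hscal H (cnj a) x),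
                   hip = (\<lambda>x y. cnj (hip H x y)),
                   hstar = hstar H\<rparr>"

text \<open>An n\<times>n matrix over 'h is a function nat \<Rightarrow> nat \<Rightarrow> 'h vanishing outside {..<n}\<times>{..<n}.
  A family of matrices (of varying sizes n \<ge> 1) is a set of pairs (n, x).\<close>

definition mats :: "nat \<Rightarrow> (nat \<Rightarrow> nat \<Rightarrow> 'h::zero) set" where
  "mats n = {x. \<forall>i j. (n \<le> i \<or> n \<le> j) \<longrightarrow> x i j = 0}"

definition hermitian_mat :: "('h::ab_group_add) hsp \<Rightarrow> nat \<Rightarrow> (nat \<Rightarrow> nat \<Rightarrow> 'h) \<Rightarrow> bool" where
  "hermitian_mat H n x \<longleftrightarrow> (\<forall>i<n. \<forall>j<n. x i j = hstar H (x j i))"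

definition psd_on :: "'i set \<Rightarrow> ('i \<Rightarrow> 'i \<Rightarrow> complex) \<Rightarrow> bool" where
  "psd_on I A \<longleftrightarrow> (\<forall>v :: 'i \<Rightarrow> complex.
      let q = (\<Sum>p\<in>I. \<Sum>r\<in>I. cnj (v p) * A p r * v r) in Im q = 0 \<and> 0 \<le> Re q)"

text \<open>Matrix pairing \<open>\<langle>\<langle>\<zeta>, \<eta>-bar\<rangle>\<rangle> = [(\<zeta>_ik, \<eta>_jl)]_{(i,j),(k,l)}\<close> in M_{mn}, which is
  positive iff psd on the index set {..<m}\<times>{..<n}.\<close>
definition mat_pairing :: "('h, 'z) hsp_scheme \<Rightarrow> (nat \<Rightarrow> nat \<Rightarrow> 'h) \<Rightarrow> (nat \<Rightarrow> nat \<Rightarrow> 'h)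
     \<Rightarrow> (nat \<times> nat) \<Rightarrow> (nat \<times> nat) \<Rightarrow> complex" where
  "mat_pairing H z y = (\<lambda>(i, j) (k, l). hip H (z i k) (y j l))"

definition pairing_pos :: "('h::ab_group_add) hsp \<Rightarrow> nat \<Rightarrow> (nat \<Rightarrow> nat \<Rightarrow> 'h) \<Rightarrow> nat \<Rightarrow> (nat \<Rightarrow> nat \<Rightarrow> 'h) \<Rightarrow> bool" where
  "pairing_pos H m z n y \<longleftrightarrow> psd_on ({..<m} \<times> {..<n}) (mat_pairing H z y)"

text \<open>Quantum polar of a family over H: a family over conj H.\<close>
definition qpolar :: "('h::ab_group_add) hsp \<Rightarrow> (nat \<times> (nat \<Rightarrow> nat \<Rightarrow> 'h)) set
     \<Rightarrow> (nat \<times> (nat \<Rightarrow> nat \<Rightarrow> 'h)) set" where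
  "qpolar H M = {(n, y). 1 \<le> n \<and> y \<in> mats n \<and> hermitian_mat (conj_space H) n y \<and>
                    (\<forall>(m, z) \<in> M. pairing_pos H m z n y)}"

text \<open>Quantum polar of a family over conj H: a family over H.\<close>
definition qpolar_bar :: "('h::ab_group_add) hsp \<Rightarrow> (nat \<times> (nat \<Rightarrow> nat \<Rightarrow> 'h)) set
     \<Rightarrow> (nat \<times> (nat \<Rightarrow> nat \<Rightarrow> 'h)) set" where
  "qpolar_bar H N = {(n, z). 1 \<le> n \<and> z \<in> mats n \<and> hermitian_mat H n z \<and>
                    (\<forall>(m, y) \<in> N. pairing_pos H n z m y)}"

definition level1 :: "('h::zero) set \<Rightarrow> (nat \<times> (nat \<Rightarrow> nat \<Rightarrow> 'h)) set" where
  "level1 S = {(1, \<lambda>i j. if i = 0 \<and> j = 0 then z else 0) | z. z \<in> S}"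

definition state :: "('h::ab_group_add) hsp \<Rightarrow> 'h \<Rightarrow> ('h \<Rightarrow> complex) \<Rightarrow> bool" where
  "state K u \<sigma> \<longleftrightarrow>
     (\<forall>x y. \<sigma> (x + y) = \<sigma> x + \<sigma> y) \<and> (\<forall>a x. \<sigma> (hscal K a x) = a * \<sigma> x) \<and>
     \<sigma> u = 1 \<and> (\<forall>z \<in> unital_cone K u. Im (\<sigma> z) = 0 \<and> 0 \<le> Re (\<sigma> z))"

definition min_cone :: "('h::ab_group_add) hsp \<Rightarrow> 'h \<Rightarrow> (nat \<times> (nat \<Rightarrow> nat \<Rightarrow> 'h)) set" where
  "min_cone K u = {(n, x). 1 \<le> n \<and> x \<in> mats n \<and> hermitian_mat K n x \<and>
      (\<forall>\<sigma>. state K u \<sigma> \<longrightarrow> psd_on {..<n} (\<lambda>i j. \<sigma> (x i j)))}"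

text \<open>max c_e = c_e^{\<boxdot>\<boxdot>} for (H,e) and max of the conjugate cone for (conj H, e-bar).\<close>
definition max_cone :: "('h::ab_group_add) hsp \<Rightarrow> 'h \<Rightarrow> (nat \<times> (nat \<Rightarrow> nat \<Rightarrow> 'h)) set" where
  "max_cone H e = qpolar_bar H (qpolar H (level1 (unital_cone H e)))"

definition max_cone_bar :: "('h::ab_group_add) hsp \<Rightarrow> 'h \<Rightarrow> (nat \<times> (nat \<Rightarrow> nat \<Rightarrow> 'h)) set" where
  "max_cone_bar H e = qpolar H (qpolar_bar H (level1 (unital_cone (conj_space H) e)))"

end

theory Submission
  imports Defs "HOL-Library.Complex_Order"
begin

text \<open>Writing a hermitian \<open>\<zeta>\<close> as \<open>\<zeta>' + a e\<close> with \<open>\<zeta>' \<perp> e\<close>, the unital cone is the circular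
  cone \<open>\<parallel>\<zeta>'\<parallel> \<le> a\<close> of half-angle \<open>\<pi>/4\<close> around \<open>e\<close>, and such a cone is self-dual: a hermitian
  \<open>\<zeta>\<close> lies in \<open>\<frak>c\<^sub>e\<close> iff \<open>(c, \<zeta>) \<ge> 0\<close> for all \<open>c \<in> \<frak>c\<^sub>e\<close>.  Hence the states are the
  functionals \<open>(\<cdot>, c) / (c, e)\<close> with \<open>0 \<noteq> c \<in> \<frak>c\<^sub>e\<close>, and for a hermitian \<open>\<eta> \<in> M\<^sub>n(H)\<close> the
  matrices \<open>[(c, \<eta>\<^sub>j\<^sub>l)]\<close>, \<open>c \<in> \<frak>c\<^sub>e\<close>, are all positive iff every vector
  \<open>\<Sum> cnj(v\<^sub>p) v\<^sub>r \<eta>\<^sub>p\<^sub>r\<close> lies in \<open>\<frak>c\<^sub>e\<close>, iff \<open>[\<sigma>(\<eta>\<^sub>i\<^sub>j)] \<ge> 0\<close> for all states \<open>\<sigma>\<close>; that is,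
  \<open>\<frak>c\<^sub>e\<^sup>\<boxdot> = min \<frak>c\<^sub>e\<close>.  The conjugate space has the same cone and hermitian matrices, and
  its states and the matrix pairing agree with those of \<open>H\<close> up to conjugation, so both quantum
  polars are the same operation and \<open>min \<frak>c\<^sub>e\<close> is unchanged.  The theorem thus reduces to
  \<open>\<frak>c\<^sub>e\<^sup>\<boxdot>\<^sup>\<boxdot>\<^sup>\<boxdot> = \<frak>c\<^sub>e\<^sup>\<boxdot>\<close>.\<close>

lemma complex_nonneg_iff: "0 \<le> (z::complex) \<longleftrightarrow> Im z = 0 \<and> 0 \<le> Re z"
  by (auto simp: less_eq_complex_def)

lemma cnj_nonneg_iff: "0 \<le> cnj z \<longleftrightarrow> 0 \<le> z"
  by (simp add: complex_nonneg_iff)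

lemma sqrt_le_sqrt2_mult_iff:
  fixes R a :: real
  assumes "0 \<le> R"
  shows "sqrt R \<le> sqrt 2 * a \<longleftrightarrow> 0 \<le> a \<and> R \<le> 2 * a\<^sup>2"
proof
  assume le: "sqrt R \<le> sqrt 2 * a"
  then have "0 \<le> sqrt 2 * a"
    using real_sqrt_ge_zero[OF assms] by linarith
  then have "0 \<le> a"
    by (simp add: zero_le_mult_iff)
  moreover have "(sqrt R)\<^sup>2 \<le> (sqrt 2 * a)\<^sup>2"
    by (rule power_mono[OF le real_sqrt_ge_zero[OF assms]])
  ultimately show "0 \<le> a \<and> R \<le> 2 * a\<^sup>2"
    using assms by (simp add: power_mult_distrib)
next
  assume "0 \<le> a \<and> R \<le> 2 * a\<^sup>2"
  then show "sqrt R \<le> sqrt 2 * a"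
    by (metis real_sqrt_abs real_sqrt_le_mono real_sqrt_mult abs_of_nonneg)
qed

lemma psd_on_iff: "psd_on I A \<longleftrightarrow> (\<forall>v. 0 \<le> (\<Sum>p\<in>I. \<Sum>r\<in>I. cnj (v p) * A p r * v r))"
  by (simp add: psd_on_def complex_nonneg_iff)

lemma psd_on_cong:
  "(\<And>p r. p \<in> I \<Longrightarrow> r \<in> I \<Longrightarrow> A p r = B p r) \<Longrightarrow> psd_on I A \<longleftrightarrow> psd_on I B"
  by (simp add: psd_on_iff cong: sum.cong)

lemma psd_on_cnj:
  assumes "psd_on I A"
  shows "psd_on I (\<lambda>p r. cnj (A p r))"
  unfolding psd_on_iff
proof
  fix v :: "'a \<Rightarrow> complex"
  let ?q = "\<Sum>p\<in>I. \<Sum>r\<in>I. cnj (cnj (v p)) * A p r * cnj (v r)"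
  have "0 \<le> ?q"
    using assms[unfolded psd_on_iff, rule_format, of "\<lambda>p. cnj (v p)"] .
  then have "0 \<le> cnj ?q"
    by (simp only: cnj_nonneg_iff)
  then show "0 \<le> (\<Sum>p\<in>I. \<Sum>r\<in>I. cnj (v p) * cnj (A p r) * v r)"
    by simp
qed

lemma psd_on_cnj_iff: "psd_on I (\<lambda>p r. cnj (A p r)) \<longleftrightarrow> psd_on I A"
  using psd_on_cnj[of I "\<lambda>p r. cnj (A p r)"] psd_on_cnj[of I A] by auto

lemma psd_on_scale:
  assumes "psd_on I A" and "0 \<le> k"
  shows "psd_on I (\<lambda>p r. k * A p r)"
  unfolding psd_on_iff
proof
  fix v :: "'a \<Rightarrow> complex"
  have "(\<Sum>p\<in>I. \<Sum>r\<in>I. cnj (v p) * (k * A p r) * v r)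
      = k * (\<Sum>p\<in>I. \<Sum>r\<in>I. cnj (v p) * A p r * v r)"
    by (simp add: sum_distrib_left ac_simps)
  also have "0 \<le> \<dots>"
    using assms by (simp add: psd_on_iff)
  finally show "0 \<le> (\<Sum>p\<in>I. \<Sum>r\<in>I. cnj (v p) * (k * A p r) * v r)" .
qed

lemma psd_on_reindex:
  assumes bij: "bij_betw h J I" and psd: "psd_on I A"
  shows "psd_on J (\<lambda>p r. A (h p) (h r))"
  unfolding psd_on_iff
proof
  fix v :: "_ \<Rightarrow> complex"
  define w where "w x = v (the_inv_into J h x)" for x
  have w: "w (h q) = v q" if "q \<in> J" for q
    using bij that by (simp add: w_def bij_betw_def the_inv_into_f_f)
  have "0 \<le> (\<Sum>p\<in>I. \<Sum>r\<in>I. cnj (w p) * A p r * w r)"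
    using psd by (simp add: psd_on_iff)
  also have "\<dots> = (\<Sum>p\<in>J. \<Sum>r\<in>J. cnj (w (h p)) * A (h p) (h r) * w (h r))"
    by (simp only: sum.reindex_bij_betw[OF bij, symmetric])
  also have "\<dots> = (\<Sum>p\<in>J. \<Sum>r\<in>J. cnj (v p) * A (h p) (h r) * v r)"
    by (simp add: w cong: sum.cong)
  finally show "0 \<le> (\<Sum>p\<in>J. \<Sum>r\<in>J. cnj (v p) * A (h p) (h r) * v r)" .
qed

lemma pairing_pos_level1:
  "pairing_pos H 1 (\<lambda>i j. if i = 0 \<and> j = 0 then c else 0) n y
     \<longleftrightarrow> psd_on {..<n} (\<lambda>j l. hip H c (y j l))"
proof
  assume "pairing_pos H 1 (\<lambda>i j. if i = 0 \<and> j = 0 then c else 0) n y"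
  moreover have "bij_betw (\<lambda>j. (0::nat, j)) {..<n} ({..<1} \<times> {..<n})"
    by (rule bij_betw_byWitness[where f' = snd]) auto
  ultimately show "psd_on {..<n} (\<lambda>j l. hip H c (y j l))"
    using psd_on_reindex by (fastforce simp: pairing_pos_def mat_pairing_def)
next
  assume psd: "psd_on {..<n} (\<lambda>j l. hip H c (y j l))"
  have "bij_betw snd ({..<1::nat} \<times> {..<n}) {..<n}"
    by (rule bij_betw_byWitness[where f' = "\<lambda>j. (0, j)"]) auto
  from psd_on_reindex[OF this psd]
  have "psd_on ({..<1::nat} \<times> {..<n}) (\<lambda>p r. hip H c (y (snd p) (snd r)))" .
  then show "pairing_pos H 1 (\<lambda>i j. if i = 0 \<and> j = 0 then c else 0) n y"
    unfolding pairing_pos_def by (rule iffD1[OF psd_on_cong, rotated]) (auto simp: mat_pairing_def)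
qed

locale star_inner_product_space =
  fixes H :: "('h::ab_group_add) hsp"
  assumes inner_product: "inner_product_space H"
    and hstar_add: "hstar H (x + y) = hstar H x + hstar H y"
    and hstar_scal: "hstar H (hscal H a x) = hscal H (cnj a) (hstar H x)"
    and hstar_hstar [simp]: "hstar H (hstar H x) = x"
    and hip_hstar: "hip H (hstar H x) (hstar H y) = cnj (hip H x y)"
begin

lemma hip_add_left: "hip H (x + y) z = hip H x z + hip H y z"
  using inner_product unfolding inner_product_space_def by blast

lemma hip_scal_left: "hip H (hscal H a x) y = a * hip H x y"
  using inner_product unfolding inner_product_space_def by blast

lemma hip_commute: "hip H y x = cnj (hip H x y)"
  using inner_product unfolding inner_product_space_def by blast

lemma hip_self_nonneg: "0 \<le> hip H x x"
  using inner_product unfolding inner_product_space_def complex_nonneg_iff by blast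

lemma hip_self_Re_nonpos_imp_zero: "Re (hip H x x) \<le> 0 \<Longrightarrow> x = 0"
  using inner_product hip_self_nonneg[of x]
  unfolding inner_product_space_def complex_nonneg_iff by (metis antisym complex_eqI zero_complex.sel)

lemma hip_add_right: "hip H z (x + y) = hip H z x + hip H z y"
  by (metis hip_commute hip_add_left complex_cnj_add)

lemma hip_scal_right: "hip H x (hscal H a y) = cnj a * hip H x y"
  by (metis hip_commute hip_scal_left complex_cnj_mult)

lemma hip_zero_left [simp]: "hip H 0 y = 0"
  using hip_add_left[of 0 0 y] by simp

lemma hip_zero_right [simp]: "hip H y 0 = 0"
  using hip_add_right[of y 0 0] by simp

lemma hip_minus_left: "hip H (- x) y = - hip H x y"
  using hip_add_left[of x "- x" y] by (simp add: eq_neg_iff_add_eq_0 add.commute)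

lemma hip_minus_right: "hip H y (- x) = - hip H y x"
  using hip_add_right[of y x "- x"] by (simp add: eq_neg_iff_add_eq_0 add.commute)

lemma hip_diff_left: "hip H (x - y) z = hip H x z - hip H y z"
  by (simp only: diff_conv_add_uminus hip_add_left hip_minus_left)

lemma hip_diff_right: "hip H z (x - y) = hip H z x - hip H z y"
  by (simp only: diff_conv_add_uminus hip_add_right hip_minus_right)

lemma hip_sum_right: "hip H z (sum f S) = (\<Sum>i\<in>S. hip H z (f i))"
  by (induction S rule: infinite_finite_induct) (simp_all add: hip_add_right)

lemmas hip_simps = hip_add_left hip_add_right hip_scal_left hip_scal_right
  hip_diff_left hip_diff_right hip_minus_left hip_minus_right

lemma hstar_zero [simp]: "hstar H 0 = 0"
  using hstar_add[of 0 0] by simp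

lemma hstar_minus: "hstar H (- x) = - hstar H x"
  using hstar_add[of x "- x"] by (simp add: eq_neg_iff_add_eq_0 add.commute)

lemma hstar_diff: "hstar H (x - y) = hstar H x - hstar H y"
  by (simp only: diff_conv_add_uminus hstar_add hstar_minus)

lemma hstar_sum: "hstar H (sum f S) = (\<Sum>i\<in>S. hstar H (f i))"
  by (induction S rule: infinite_finite_induct) (simp_all add: hstar_add)

lemma Im_hip_hermitian: "hstar H x = x \<Longrightarrow> hstar H y = y \<Longrightarrow> Im (hip H x y) = 0"
  using hip_hstar[of x y] by (metis Reals_cnj_iff complex_is_Real_iff)

text \<open>A Cauchy--Schwarz type bound, obtained from \<open>0 \<le> \<parallel>b z + a c\<parallel>\<^sup>2 \<le> 2 a\<^sup>2 b\<^sup>2 + 2 a b Re (z, c)\<close>.\<close>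
lemma Re_hip_ge_neg_mult:
  assumes z: "Re (hip H z z) \<le> a\<^sup>2" and c: "Re (hip H c c) \<le> b\<^sup>2" and "0 \<le> a" "0 \<le> b"
  shows "- (a * b) \<le> Re (hip H z c)"
proof (cases "a = 0 \<or> b = 0")
  case True
  then have "z = 0 \<or> c = 0"
    using z c by (auto intro: hip_self_Re_nonpos_imp_zero)
  then show ?thesis
    using True by auto
next
  case False
  then have ab: "0 < a * b"
    using \<open>0 \<le> a\<close> \<open>0 \<le> b\<close> by simp
  have "Re (hip H c z) = Re (hip H z c)"
    using hip_commute[of c z] by simp
  moreover have "0 \<le> Re (hip H (hscal H b z + hscal H a c) (hscal H b z + hscal H a c))"
    using hip_self_nonneg complex_nonneg_iff by blast
  ultimately have "0 \<le> b\<^sup>2 * Re (hip H z z) + a\<^sup>2 * Re (hip H c c) + 2 * (a * b) * Re (hip H z c)"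
    by (simp add: hip_simps algebra_simps power2_eq_square)
  moreover have "b\<^sup>2 * Re (hip H z z) \<le> (a * b)\<^sup>2" and "a\<^sup>2 * Re (hip H c c) \<le> (a * b)\<^sup>2"
    using mult_left_mono[OF z, of "b\<^sup>2"] mult_left_mono[OF c, of "a\<^sup>2"]
    by (simp_all add: power_mult_distrib mult.commute)
  ultimately have "0 \<le> 2 * (a * b) * (a * b + Re (hip H z c))"
    by (simp add: distrib_left power2_eq_square)
  then show ?thesis
    using ab by (simp add: zero_le_mult_iff)
qed

end

lemma star_inner_product_space_if_hilbert_star_space:
  "hilbert_star_space H \<Longrightarrow> star_inner_product_space H"
  by (simp add: hilbert_star_space_def star_inner_product_space_def)

section \<open>The unital cone is self-dual\<close>

locale unital_star_space = star_inner_product_space +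
  fixes e
  assumes hstar_unit: "hstar H e = e" and hnorm_unit: "hnorm H e = 1"
begin

lemma hip_unit_unit [simp]: "hip H e e = 1"
  using hnorm_unit hip_self_nonneg[of e]
  by (simp add: hnorm_def complex_nonneg_iff complex_eq_iff)

lemma unital_cone_iff: "x \<in> unital_cone H e \<longleftrightarrow>
    hstar H x = x \<and> 0 \<le> Re (hip H x e) \<and> Re (hip H x x) \<le> 2 * (Re (hip H x e))\<^sup>2"
  using sqrt_le_sqrt2_mult_iff[of "Re (hip H x x)"] hip_self_nonneg[of x]
  by (auto simp: unital_cone_def hermitian_part_def hnorm_def complex_nonneg_iff)

lemma hermitian_orthogonal_decomp:
  assumes "hstar H x = x"
  obtains x' where "x = x' + hscal H (of_real (Re (hip H x e))) e"
    and "hstar H x' = x'" and "hip H x' e = 0" and "hip H e x' = 0"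
proof
  define a where "a = Re (hip H x e)"
  have xe: "hip H x e = of_real a"
    using Im_hip_hermitian[OF assms hstar_unit] by (simp add: a_def complex_eq_iff)
  show "x = (x - hscal H (of_real a) e) + hscal H (of_real a) e"
    by simp
  show "hstar H (x - hscal H (of_real a) e) = x - hscal H (of_real a) e"
    using assms by (simp add: hstar_diff hstar_scal hstar_unit)
  show "hip H (x - hscal H (of_real a) e) e = 0"
    using xe by (simp add: hip_simps)
  then show "hip H e (x - hscal H (of_real a) e) = 0"
    by (metis hip_commute complex_cnj_zero)
qed

lemma orthogonal_add_unit_in_unital_cone_iff:
  assumes "hstar H x' = x'" and "hip H x' e = 0"
  shows "x' + hscal H (of_real a) e \<in> unital_cone H e \<longleftrightarrow> 0 \<le> a \<and> Re (hip H x' x') \<le> a\<^sup>2"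
proof -
  have "hip H e x' = 0"
    using assms(2) by (metis hip_commute complex_cnj_zero)
  then have "hip H (x' + hscal H (of_real a) e) e = of_real a"
    and "Re (hip H (x' + hscal H (of_real a) e) (x' + hscal H (of_real a) e)) = Re (hip H x' x') + a\<^sup>2"
    using assms(2) by (simp_all add: hip_simps power2_eq_square)
  moreover have "hstar H (x' + hscal H (of_real a) e) = x' + hscal H (of_real a) e"
    using assms(1) by (simp add: hstar_add hstar_scal hstar_unit)
  ultimately show ?thesis
    by (simp add: unital_cone_iff)
qed

lemma unital_cone_hip_nonneg:
  assumes z: "z \<in> unital_cone H e" and c: "c \<in> unital_cone H e"
  shows "0 \<le> hip H z c"
proof -
  have zh: "hstar H z = z" and ch: "hstar H c = c"
    using z c by (simp_all add: unital_cone_iff)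
  define a b where "a = Re (hip H z e)" and "b = Re (hip H c e)"
  obtain z' where z': "z = z' + hscal H (of_real a) e" "hstar H z' = z'" "hip H z' e = 0"
    using hermitian_orthogonal_decomp[OF zh] a_def by metis
  obtain c' where c': "c = c' + hscal H (of_real b) e" "hstar H c' = c'" "hip H c' e = 0"
      "hip H e c' = 0"
    using hermitian_orthogonal_decomp[OF ch] b_def by metis
  have "0 \<le> a" "Re (hip H z' z') \<le> a\<^sup>2" "0 \<le> b" "Re (hip H c' c') \<le> b\<^sup>2"
    using z c z' c' by (simp_all add: orthogonal_add_unit_in_unital_cone_iff)
  then have "0 \<le> Re (hip H z' c') + a * b"
    using Re_hip_ge_neg_mult by fastforce
  moreover have "hip H z c = hip H z' c' + of_real (a * b)"
    using z' c' by (simp add: hip_simps)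
  ultimately show ?thesis
    using Im_hip_hermitian[OF zh ch] by (simp add: complex_nonneg_iff)
qed

lemma unital_cone_if_dual:
  assumes xh: "hstar H x = x" and dual: "\<And>c. c \<in> unital_cone H e \<Longrightarrow> 0 \<le> hip H c x"
  shows "x \<in> unital_cone H e"
proof -
  define a where "a = Re (hip H x e)"
  obtain x' where x': "x = x' + hscal H (of_real a) e" "hstar H x' = x'"
      "hip H x' e = 0" "hip H e x' = 0"
    using hermitian_orthogonal_decomp[OF xh] a_def by metis
  define t where "t = sqrt (Re (hip H x' x'))"
  have t0: "0 \<le> t" and x'x': "hip H x' x' = of_real (t\<^sup>2)"
    using hip_self_nonneg[of x'] by (simp_all add: t_def complex_nonneg_iff complex_eq_iff)
  have "0 \<le> a"
    using dual[of e] x' by (simp add: unital_cone_iff hstar_unit hip_simps complex_nonneg_iff)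
  moreover have "t \<le> a"
  proof (cases "t = 0")
    case True
    then show ?thesis using \<open>0 \<le> a\<close> by simp
  next
    case False
    text \<open>Test against the boundary vector \<open>e - x'/\<parallel>x'\<parallel>\<close> of the cone.\<close>
    define c where "c = - hscal H (of_real (1 / t)) x' + hscal H (of_real 1) e"
    have "c \<in> unital_cone H e"
      unfolding c_def using x' x'x' t0 False
      by (subst orthogonal_add_unit_in_unital_cone_iff)
        (simp_all add: hstar_minus hstar_scal hip_simps power2_eq_square)
    moreover have "hip H c x = of_real (a - t)"
      using x' x'x' False by (simp add: c_def hip_simps power2_eq_square)
    ultimately show ?thesis
      using dual by (fastforce simp: complex_nonneg_iff)
  qed
  ultimately show ?thesis
    using x' x'x' t0 by (simp add: orthogonal_add_unit_in_unital_cone_iff power_mono)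
qed

lemma unital_cone_self_dual:
  "x \<in> unital_cone H e \<longleftrightarrow> hstar H x = x \<and> (\<forall>c \<in> unital_cone H e. 0 \<le> hip H c x)"
  using unital_cone_hip_nonneg unital_cone_if_dual unital_cone_iff by blast

end

lemma state_add: "state K u \<sigma> \<Longrightarrow> \<sigma> (x + y) = \<sigma> x + \<sigma> y"
  unfolding state_def by blast

lemma state_scal: "state K u \<sigma> \<Longrightarrow> \<sigma> (hscal K a x) = a * \<sigma> x"
  unfolding state_def by blast

lemma state_nonneg: "state K u \<sigma> \<Longrightarrow> z \<in> unital_cone K u \<Longrightarrow> 0 \<le> \<sigma> z"
  unfolding state_def complex_nonneg_iff by blast

lemma state_sum: "state K u \<sigma> \<Longrightarrow> \<sigma> (sum f S) = (\<Sum>i\<in>S. \<sigma> (f i))"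
  using state_add[of K u \<sigma> 0 0]
  by (induction S rule: infinite_finite_induct) (simp_all add: state_add)

definition quadratic_combination ::
    "('h::ab_group_add) hsp \<Rightarrow> nat \<Rightarrow> (nat \<Rightarrow> nat \<Rightarrow> 'h) \<Rightarrow> (nat \<Rightarrow> complex) \<Rightarrow> 'h" where
  "quadratic_combination K n y v = (\<Sum>p<n. \<Sum>r<n. hscal K (cnj (v p) * v r) (y p r))"

lemma state_quadratic_combination:
  "state K u \<sigma> \<Longrightarrow>
    \<sigma> (quadratic_combination K n y v) = (\<Sum>p<n. \<Sum>r<n. cnj (v p) * \<sigma> (y p r) * v r)"
  by (simp add: quadratic_combination_def state_sum state_scal ac_simps)

context star_inner_product_space
begin

lemma hermitian_quadratic_combination:
  assumes "hermitian_mat H n y"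
  shows "hstar H (quadratic_combination H n y v) = quadratic_combination H n y v"
proof -
  have y: "hstar H (y p r) = y r p" if "p < n" "r < n" for p r
    using assms that unfolding hermitian_mat_def by (metis hstar_hstar)
  have "hstar H (quadratic_combination H n y v)
      = (\<Sum>p<n. \<Sum>r<n. hscal H (v p * cnj (v r)) (y r p))"
    by (simp add: quadratic_combination_def hstar_sum hstar_scal y)
  also have "\<dots> = quadratic_combination H n y v"
    unfolding quadratic_combination_def by (subst sum.swap) (simp add: ac_simps)
  finally show ?thesis .
qed

lemma hip_quadratic_combination:
  "hip H c (quadratic_combination H n y v)
    = (\<Sum>p<n. \<Sum>r<n. cnj (cnj (v p)) * hip H c (y p r) * cnj (v r))"
  by (simp add: quadratic_combination_def hip_sum_right hip_scal_right ac_simps)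

end

context unital_star_space
begin

lemma Re_hip_unit_pos_if_unital_cone:
  assumes "c \<in> unital_cone H e" and "c \<noteq> 0"
  shows "0 < Re (hip H c e)"
proof (rule ccontr)
  assume "\<not> 0 < Re (hip H c e)"
  with assms(1) have "Re (hip H c c) \<le> 0"
    by (auto simp: unital_cone_iff)
  then show False
    using \<open>c \<noteq> 0\<close> hip_self_Re_nonpos_imp_zero by blast
qed

lemma state_of_unital_cone:
  assumes c: "c \<in> unital_cone H e" and "c \<noteq> 0"
  shows "state H e (\<lambda>x. hip H x c / of_real (Re (hip H c e)))"
proof -
  define \<kappa> where "\<kappa> = Re (hip H c e)"
  have "0 < \<kappa>"
    using Re_hip_unit_pos_if_unital_cone[OF assms] by (simp add: \<kappa>_def)
  moreover have "hip H e c = of_real \<kappa>"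
    using c Im_hip_hermitian[OF hstar_unit, of c] hip_commute[of e c]
    by (simp add: \<kappa>_def complex_eq_iff unital_cone_iff)
  ultimately show ?thesis
    using unital_cone_hip_nonneg[OF _ c] unfolding \<kappa>_def[symmetric]
    by (auto simp: state_def hip_add_left hip_scal_left add_divide_distrib complex_nonneg_iff)
qed

lemma state_psd_if_unital_cone_psd:
  assumes "hermitian_mat H n y"
    and cone_psd: "\<forall>c \<in> unital_cone H e. psd_on {..<n} (\<lambda>j l. hip H c (y j l))"
    and "state H e \<sigma>"
  shows "psd_on {..<n} (\<lambda>i j. \<sigma> (y i j))"
  unfolding psd_on_iff
proof
  fix v
  have "quadratic_combination H n y v \<in> unital_cone H e"
    unfolding unital_cone_self_dual
  proof (intro conjI ballI)
    show "hstar H (quadratic_combination H n y v) = quadratic_combination H n y v"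
      using \<open>hermitian_mat H n y\<close> by (rule hermitian_quadratic_combination)
    fix c
    assume "c \<in> unital_cone H e"
    then have "psd_on {..<n} (\<lambda>j l. hip H c (y j l))"
      using cone_psd by blast
    from this[unfolded psd_on_iff, rule_format, of "\<lambda>p. cnj (v p)"]
    show "0 \<le> hip H c (quadratic_combination H n y v)"
      by (simp add: hip_quadratic_combination)
  qed
  then have "0 \<le> \<sigma> (quadratic_combination H n y v)"
    by (rule state_nonneg[OF \<open>state H e \<sigma>\<close>])
  then show "0 \<le> (\<Sum>p\<in>{..<n}. \<Sum>r\<in>{..<n}. cnj (v p) * \<sigma> (y p r) * v r)"
    by (simp add: state_quadratic_combination[OF \<open>state H e \<sigma>\<close>])
qed

lemma unital_cone_psd_if_state_psd:
  assumes state_psd: "\<forall>\<sigma>. state H e \<sigma> \<longrightarrow> psd_on {..<n} (\<lambda>i j. \<sigma> (y i j))"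
    and c: "c \<in> unital_cone H e"
  shows "psd_on {..<n} (\<lambda>j l. hip H c (y j l))"
proof (cases "c = 0")
  case True
  then show ?thesis
    by (simp add: psd_on_iff)
next
  case False
  define \<kappa> where "\<kappa> = Re (hip H c e)"
  have "0 < \<kappa>"
    using Re_hip_unit_pos_if_unital_cone[OF c False] by (simp add: \<kappa>_def)
  have "psd_on {..<n} (\<lambda>i j. hip H (y i j) c / of_real \<kappa>)"
    using state_psd[rule_format, OF state_of_unital_cone[OF c False]] by (simp add: \<kappa>_def)
  then have "psd_on {..<n} (\<lambda>i j. of_real \<kappa> * (hip H (y i j) c / of_real \<kappa>))"
    by (rule psd_on_scale) (use \<open>0 < \<kappa>\<close> in \<open>simp add: complex_nonneg_iff\<close>)
  then have "psd_on {..<n} (\<lambda>i j. hip H (y i j) c)"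
    using \<open>0 < \<kappa>\<close> by simp
  from psd_on_cnj[OF this] show ?thesis
    by (simp flip: hip_commute)
qed

end

section \<open>Quantum polars\<close>

definition hermitian_family :: "('h::ab_group_add) hsp \<Rightarrow> (nat \<times> (nat \<Rightarrow> nat \<Rightarrow> 'h)) set \<Rightarrow> bool"
  where "hermitian_family H X \<longleftrightarrow> (\<forall>(m, z) \<in> X. 1 \<le> m \<and> z \<in> mats m \<and> hermitian_mat H m z)"

lemma hermitian_mat_conj_space [simp]: "hermitian_mat (conj_space H) n y \<longleftrightarrow> hermitian_mat H n y"
  by (simp add: hermitian_mat_def conj_space_def)

lemma qpolar_antimono: "X \<subseteq> Y \<Longrightarrow> qpolar H Y \<subseteq> qpolar H X"
  unfolding qpolar_def by auto

lemma hermitian_family_qpolar: "hermitian_family H (qpolar H X)"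
  unfolding hermitian_family_def qpolar_def by auto

lemma hermitian_family_level1_unital_cone: "hermitian_family H (level1 (unital_cone H e))"
  by (auto simp: hermitian_family_def level1_def mats_def hermitian_mat_def
      unital_cone_def hermitian_part_def)

lemma qpolar_level1:
  "qpolar H (level1 S) = {(n, y). 1 \<le> n \<and> y \<in> mats n \<and> hermitian_mat H n y \<and>
      (\<forall>c \<in> S. psd_on {..<n} (\<lambda>j l. hip H c (y j l)))}"
proof -
  have "(\<forall>(m, z) \<in> level1 S. pairing_pos H m z n y)
      \<longleftrightarrow> (\<forall>c \<in> S. psd_on {..<n} (\<lambda>j l. hip H c (y j l)))" for n y
    unfolding level1_def pairing_pos_level1[symmetric] by blast
  then show ?thesis
    unfolding qpolar_def by simp
qed

context star_inner_product_space
begin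

lemma pairing_pos_commute:
  assumes "pairing_pos H n y m z"
  shows "pairing_pos H m z n y"
proof -
  have "bij_betw prod.swap ({..<m} \<times> {..<n}) ({..<n} \<times> {..<m})"
    by (rule bij_betw_byWitness[where f' = prod.swap]) auto
  from psd_on_cnj[OF psd_on_reindex[OF this assms[unfolded pairing_pos_def]]]
  show ?thesis
    unfolding pairing_pos_def
    by (rule iffD1[OF psd_on_cong, rotated]) (auto simp: mat_pairing_def hip_commute[of "y _ _"])
qed

lemma qpolar_bar_eq_qpolar: "qpolar_bar H X = qpolar H X"
  unfolding qpolar_def qpolar_bar_def using pairing_pos_commute by auto

lemma subset_qpolar_qpolar: "hermitian_family H X \<Longrightarrow> X \<subseteq> qpolar H (qpolar H X)"
  unfolding hermitian_family_def qpolar_def using pairing_pos_commute by auto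

lemma qpolar_qpolar_qpolar:
  "hermitian_family H X \<Longrightarrow> qpolar H (qpolar H (qpolar H X)) = qpolar H X"
  using subset_qpolar_qpolar[OF hermitian_family_qpolar] qpolar_antimono[OF subset_qpolar_qpolar]
  by blast

end

lemma unital_cone_conj_space: "unital_cone (conj_space H) u = unital_cone H u"
  by (simp add: unital_cone_def conj_space_def hermitian_part_def hnorm_def)

lemma hscal_conj_space [simp]: "hscal (conj_space H) a x = hscal H (cnj a) x"
  by (simp add: conj_space_def)

lemma state_conj_space_iff: "state (conj_space H) u \<sigma> \<longleftrightarrow> state H u (\<lambda>x. cnj (\<sigma> x))"
proof -
  have add: "cnj (\<sigma> (x + y)) = cnj (\<sigma> x) + cnj (\<sigma> y) \<longleftrightarrow> \<sigma> (x + y) = \<sigma> x + \<sigma> y" for x y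
    by (metis complex_cnj_add complex_cnj_cancel_iff)
  have "cnj (\<sigma> (hscal H (cnj a) x)) = cnj a * cnj (\<sigma> x) \<longleftrightarrow> \<sigma> (hscal H (cnj a) x) = a * \<sigma> x"
    for a x
    by (metis complex_cnj_mult complex_cnj_cancel_iff)
  then have scal: "(\<forall>a x. cnj (\<sigma> (hscal H a x)) = a * cnj (\<sigma> x))
      \<longleftrightarrow> (\<forall>a x. \<sigma> (hscal H (cnj a) x) = a * \<sigma> x)"
    by (metis complex_cnj_cnj)
  show ?thesis
    unfolding state_def unital_cone_conj_space hscal_conj_space add scal by simp
qed

lemma min_cone_conj_space:
  fixes H :: "('h::ab_group_add) hsp"
  shows "min_cone (conj_space H) u = min_cone H u"
proof -
  have "(\<forall>\<sigma>. state (conj_space H) u \<sigma> \<longrightarrow> psd_on {..<n} (\<lambda>i j. \<sigma> (x i j)))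
      \<longleftrightarrow> (\<forall>\<tau>. state H u \<tau> \<longrightarrow> psd_on {..<n} (\<lambda>i j. \<tau> (x i j)))"
    for n and x :: "nat \<Rightarrow> nat \<Rightarrow> 'h"
  proof (intro iffI allI impI)
    fix \<tau>
    assume conj_psd: "\<forall>\<sigma>. state (conj_space H) u \<sigma> \<longrightarrow> psd_on {..<n} (\<lambda>i j. \<sigma> (x i j))"
      and "state H u \<tau>"
    then have "psd_on {..<n} (\<lambda>i j. cnj (\<tau> (x i j)))"
      using conj_psd[rule_format, of "\<lambda>x. cnj (\<tau> x)"] state_conj_space_iff[of H u "\<lambda>x. cnj (\<tau> x)"]
      by simp
    then show "psd_on {..<n} (\<lambda>i j. \<tau> (x i j))"
      by (simp only: psd_on_cnj_iff)
  next
    fix \<sigma>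
    assume psd: "\<forall>\<tau>. state H u \<tau> \<longrightarrow> psd_on {..<n} (\<lambda>i j. \<tau> (x i j))"
      and "state (conj_space H) u \<sigma>"
    then have "psd_on {..<n} (\<lambda>i j. cnj (\<sigma> (x i j)))"
      using psd[rule_format, of "\<lambda>x. cnj (\<sigma> x)"] state_conj_space_iff[of H u \<sigma>] by simp
    then show "psd_on {..<n} (\<lambda>i j. \<sigma> (x i j))"
      by (simp only: psd_on_cnj_iff)
  qed
  then show ?thesis
    unfolding min_cone_def by simp
qed

context unital_star_space
begin

lemma qpolar_level1_unital_cone: "qpolar H (level1 (unital_cone H e)) = min_cone H e"
proof -
  have "hermitian_mat H n y \<and> (\<forall>c \<in> unital_cone H e. psd_on {..<n} (\<lambda>j l. hip H c (y j l)))
      \<longleftrightarrow> hermitian_mat H n y \<and> (\<forall>\<sigma>. state H e \<sigma> \<longrightarrow> psd_on {..<n} (\<lambda>i j. \<sigma> (y i j)))"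
    for n y
    using state_psd_if_unital_cone_psd unital_cone_psd_if_state_psd by blast
  then show ?thesis
    unfolding qpolar_level1 min_cone_def by simp
qed

end

theorem mainTheorem5:
  fixes H :: "('h::ab_group_add) hsp" and e :: 'h
  assumes "unital_hilbert_space H e"
  shows "qpolar H (max_cone_bar H e) = min_cone H e
       \<and> qpolar_bar H (min_cone (conj_space H) e) = max_cone H e"
proof -
  interpret unital_star_space H e
    using assms star_inner_product_space_if_hilbert_star_space
    by (auto simp: unital_star_space_def unital_star_space_axioms_def
        unital_hilbert_space_def hermitian_part_def)
  let ?C = "level1 (unital_cone H e)"
  have "max_cone_bar H e = qpolar H (qpolar H ?C)"
    unfolding max_cone_bar_def unital_cone_conj_space qpolar_bar_eq_qpolar ..
  then have "qpolar H (max_cone_bar H e) = qpolar H ?C"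
    by (simp only: qpolar_qpolar_qpolar[OF hermitian_family_level1_unital_cone])
  then have "qpolar H (max_cone_bar H e) = min_cone H e"
    by (simp only: qpolar_level1_unital_cone)
  moreover have "qpolar_bar H (min_cone (conj_space H) e) = max_cone H e"
    unfolding max_cone_def min_cone_conj_space qpolar_level1_unital_cone ..
  ultimately show ?thesis ..
qed

end
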